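(* Let $G$ be a finite EPPO group. Then $\mathcal{S}(G)$ is cyclically separable if and only if either $pq$ divides $|G|$ for some primes $p > q \geq 5$, or at least two of the following three conditions hold: (i) $p$ divides $|G|$ for some prime $p \geq 5$; (ii) $3$ divides $|G|$ and $G$ has a Sylow $3$-subgroup which is not of order $3$ or is not normal in $G$; (iii) $2$ divides $|G|$ and $G$ has a Sylow $2$-subgroup which is not of order $2$ or is not normal in $G$.
   Context: A finite group is an EPPO group if every element has prime power order. All graphs are simple and undirected. For a finite group $G$, the order supergraph $\mathcal{S}(G)$ is the graph with vertex set $G$ in which two distinct vertices $x,y$ are adjacent if and only if the order of $x$ divides the order of $y$ or the order of $y$ divides the order of $x$. For a graph $\Gamma$, a vertex cutset is a set $S$ of vertices such that $\Gamma - S$ is disconnected; a cyclic vertex cutset is a vertex cutset $S$ such that $\Gamma - S$ has at least two connected components each of which contains a cycle. $\Gamma$ is called cyclically separable if it has a cyclic vertex cutset. *)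

theory Defs
  imports "HOL-Algebra.Algebra" "HOL-Computational_Algebra.Primes"
begin

definition EPPO :: "('a, 'b) monoid_scheme \<Rightarrow> bool" where
  "EPPO G \<longleftrightarrow> group G \<and> finite (carrier G) \<and>
     (\<forall>x\<in>carrier G. \<exists>p k. Factorial_Ring.prime (p::nat) \<and> group.ord G x = p ^ k)"

definition sylow_subgroup :: "('a, 'b) monoid_scheme \<Rightarrow> nat \<Rightarrow> 'a set \<Rightarrow> bool" where
  "sylow_subgroup G p P \<longleftrightarrow> subgroup P G \<and> card P = p ^ multiplicity p (order G)"

definition order_supergraph_adj :: "('a, 'b) monoid_scheme \<Rightarrow> 'a \<Rightarrow> 'a \<Rightarrow> bool" where
  "order_supergraph_adj G x y \<longleftrightarrow> x \<in> carrier G \<and> y \<in> carrier G \<and> x \<noteq> y \<and>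
     (group.ord G x dvd group.ord G y \<or> group.ord G y dvd group.ord G x)"

definition induced_adj :: "'a set \<Rightarrow> ('a \<Rightarrow> 'a \<Rightarrow> bool) \<Rightarrow> 'a \<Rightarrow> 'a \<Rightarrow> bool" where
  "induced_adj W E x y \<longleftrightarrow> x \<in> W \<and> y \<in> W \<and> E x y"

definition is_component :: "'a set \<Rightarrow> ('a \<Rightarrow> 'a \<Rightarrow> bool) \<Rightarrow> 'a set \<Rightarrow> bool" where
  "is_component W E C \<longleftrightarrow> (\<exists>u\<in>W. C = {v. (induced_adj W E)\<^sup>*\<^sup>* u v})"

definition has_cycle_in :: "'a set \<Rightarrow> ('a \<Rightarrow> 'a \<Rightarrow> bool) \<Rightarrow> bool" where
  "has_cycle_in C E \<longleftrightarrow> (\<exists>xs. length xs \<ge> 3 \<and> distinct xs \<and> set xs \<subseteq> C \<and>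
     (\<forall>i < length xs. E (xs ! i) (xs ! ((i + 1) mod length xs))))"

definition vertex_cutset :: "'a set \<Rightarrow> ('a \<Rightarrow> 'a \<Rightarrow> bool) \<Rightarrow> 'a set \<Rightarrow> bool" where
  "vertex_cutset V E S \<longleftrightarrow> S \<subseteq> V \<and>
     (\<exists>C1 C2. is_component (V - S) E C1 \<and> is_component (V - S) E C2 \<and> C1 \<noteq> C2)"

definition cyclic_vertex_cutset :: "'a set \<Rightarrow> ('a \<Rightarrow> 'a \<Rightarrow> bool) \<Rightarrow> 'a set \<Rightarrow> bool" where
  "cyclic_vertex_cutset V E S \<longleftrightarrow> vertex_cutset V E S \<and>
     (\<exists>C1 C2. is_component (V - S) E C1 \<and> is_component (V - S) E C2 \<and> C1 \<noteq> C2 \<and>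
        has_cycle_in C1 E \<and> has_cycle_in C2 E)"

definition cyclically_separable :: "'a set \<Rightarrow> ('a \<Rightarrow> 'a \<Rightarrow> bool) \<Rightarrow> bool" where
  "cyclically_separable V E \<longleftrightarrow> (\<exists>S. cyclic_vertex_cutset V E S)"

end

theory Submission
  imports Defs
begin

text \<open>In an EPPO group two nontrivial elements are adjacent in the order supergraph iff their
  orders are powers of the same prime, while the identity is adjacent to every vertex. So every
  vertex cutset contains the identity, and once it is removed the components are the cliques of
  nontrivial \<open>p\<close>-elements. Hence the graph is cyclically separable iff at least two primes
  have at least three nontrivial \<open>p\<close>-elements. This count is at least three iff \<open>p \<ge> 5\<close>
  divides \<open>|G|\<close>, or a Sylow \<open>p\<close>-subgroup has order at least \<open>p\<^sup>2 \<ge> 4\<close>, or it has order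
  \<open>p\<close> and is not normal: then a conjugate of a generator lies outside it, and for \<open>p = 2\<close> the
  product or a conjugate of two involutions gives a third one. A normal Sylow subgroup of
  order \<open>p\<close> contains all \<open>p\<close>-elements, which leaves only \<open>p - 1 \<le> 2\<close> of them.\<close>

lemma has_cycle_in_card_ge_3:
  assumes "has_cycle_in C E" "finite C"
  shows "3 \<le> card C"
proof -
  obtain xs where xs: "3 \<le> length xs" "distinct xs" "set xs \<subseteq> C"
    using assms(1) by (auto simp: has_cycle_in_def)
  then show ?thesis
    using card_mono[OF assms(2) xs(3)] by (simp add: distinct_card)
qed

lemma has_cycle_in_clique:
  assumes "3 \<le> card C" and clique: "\<And>x y. x \<in> C \<Longrightarrow> y \<in> C \<Longrightarrow> x \<noteq> y \<Longrightarrow> E x y"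
  shows "has_cycle_in C E"
proof -
  obtain D where "D \<subseteq> C" "card D = 3"
    using assms(1) obtain_subset_with_card_n by metis
  then obtain a b c where "{a, b, c} \<subseteq> C" "distinct [a, b, c]"
    by (auto simp: card_3_iff)
  then show ?thesis
    unfolding has_cycle_in_def using clique
    by (intro exI[of _ "[a, b, c]"]) (auto simp: less_Suc_eq)
qed

lemma prime_eq_if_power_dvd_power:
  fixes p q :: nat
  assumes "Factorial_Ring.prime p" "Factorial_Ring.prime q" "0 < k" "p ^ k dvd q ^ j"
  shows "p = q"
proof -
  have "p dvd q ^ j" using assms(3,4) dvd_power dvd_trans by blast
  then show ?thesis
    using assms(1,2) prime_dvd_power primes_dvd_imp_eq by blast
qed

lemma prime_less_5_cases:
  fixes p :: nat
  assumes "Factorial_Ring.prime p" "p < 5"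
  shows "p = 2 \<or> p = 3"
proof -
  have "p \<noteq> 2 * 2" using assms(1) prime_product by fastforce
  then show ?thesis using assms prime_ge_2_nat[of p] by auto
qed

lemma two_primes_iff:
  fixes M :: "nat \<Rightarrow> bool" and n :: nat
  assumes big: "\<And>p. Factorial_Ring.prime p \<Longrightarrow> 5 \<le> p \<Longrightarrow> M p \<longleftrightarrow> p dvd n"
  defines "big_prime \<equiv> \<exists>p. Factorial_Ring.prime p \<and> 5 \<le> p \<and> p dvd n"
  shows "(\<exists>p q. Factorial_Ring.prime p \<and> Factorial_Ring.prime q \<and> p \<noteq> q \<and> M p \<and> M q) \<longleftrightarrow>
    (\<exists>p q. Factorial_Ring.prime p \<and> Factorial_Ring.prime q \<and> q < p \<and> 5 \<le> q \<and> p * q dvd n) \<or>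
    (big_prime \<and> M 3) \<or> (big_prime \<and> M 2) \<or> (M 3 \<and> M 2)"
  (is "?two \<longleftrightarrow> ?cases")
proof
  have "?cases" if pq: "Factorial_Ring.prime p" "Factorial_Ring.prime q" "q < p" "M p" "M q" for p q
  proof (cases "5 \<le> q")
    case True
    then have "p dvd n" "q dvd n" using big pq by auto
    then have "p * q dvd n"
      using pq by (simp add: divides_mult primes_coprime)
    then show ?thesis using pq True by blast
  next
    case False
    then have q: "q = 2 \<or> q = 3" using prime_less_5_cases pq(2) by simp
    show ?thesis
    proof (cases "5 \<le> p")
      case True
      then have big_prime using big pq unfolding big_prime_def by blast
      then show ?thesis using q pq by blast
    next
      case False
      then have "p = 3" "q = 2" using prime_less_5_cases[OF pq(1)] q pq(3) by auto
      then show ?thesis using pq by blast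
    qed
  qed
  then show "?two \<Longrightarrow> ?cases" by (metis linorder_neqE_nat)
next
  assume ?cases
  then consider (large) p q where "Factorial_Ring.prime p" "Factorial_Ring.prime q" "q < p" "5 \<le> q"
      "p * q dvd n"
    | (three) p where "Factorial_Ring.prime p" "5 \<le> p" "p dvd n" "M 3"
    | (two) p where "Factorial_Ring.prime p" "5 \<le> p" "p dvd n" "M 2"
    | (three_two) "M 3" "M 2"
    unfolding big_prime_def by blast
  then show ?two
  proof cases
    case large
    then have "M p" "M q" using big dvd_mult_left dvd_mult_right by auto
    then show ?thesis using large by (intro exI[of _ p] exI[of _ q]) auto
  next
    case three
    then show ?thesis using big by (intro exI[of _ p] exI[of _ 3]) auto
  next
    case two
    then show ?thesis using big by (intro exI[of _ p] exI[of _ 2]) auto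
  next
    case three_two
    then show ?thesis by (intro exI[of _ 3] exI[of _ 2]) auto
  qed
qed

section \<open>Orders of elements and Sylow subgroups\<close>

context group
begin

lemma ord_dvd_subgroup_card:
  assumes "subgroup P G" "x \<in> P"
  shows "ord x dvd card P"
proof -
  interpret P: group "G\<lparr>carrier := P\<rparr>" using subgroup.subgroup_is_group assms(1) is_group .
  have "x [^]\<^bsub>G\<lparr>carrier := P\<rparr>\<^esub> order (G\<lparr>carrier := P\<rparr>) = \<one>"
    using P.pow_order_eq_1[of x] assms(2) by simp
  then have "x [^] card P = \<one>" by (simp add: order_def flip: nat_pow_consistent)
  then show ?thesis using pow_eq_id assms subgroup.subset by blast
qed

lemma ord_conj:
  assumes g: "g \<in> carrier G" and h: "h \<in> carrier G"
  shows "ord (g \<otimes> h \<otimes> inv g) = ord h"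
proof -
  have cancel: "inv g \<otimes> (g \<otimes> y) = y" if "y \<in> carrier G" for y
    using g that by (simp flip: m_assoc)
  have pow: "(g \<otimes> h \<otimes> inv g) [^] n = g \<otimes> h [^] n \<otimes> inv g" for n :: nat
    by (induction n) (use g h in \<open>simp_all add: m_assoc cancel\<close>)
  have "(g \<otimes> h \<otimes> inv g) [^] n = \<one> \<longleftrightarrow> h [^] n = \<one>" for n :: nat
    unfolding pow using g h by (simp add: inv_solve_right')
  then show ?thesis
    using ord_unique[of "g \<otimes> h \<otimes> inv g" "ord h"] pow_eq_id[OF h] g h by simp
qed

lemma ord_eq_2_iff:
  assumes "x \<in> carrier G"
  shows "ord x = 2 \<longleftrightarrow> x \<otimes> x = \<one> \<and> x \<noteq> \<one>"
proof -
  have "x \<otimes> x = \<one> \<longleftrightarrow> ord x dvd 2"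
    using pow_eq_id[OF assms, of 2] assms by (simp add: numeral_2_eq_2)
  moreover have "ord x dvd 2 \<and> ord x \<noteq> 1 \<longleftrightarrow> ord x = 2"
    using two_is_prime_nat unfolding prime_nat_iff by auto
  ultimately show ?thesis using ord_eq_1[OF assms] by blast
qed

lemma exists_third_involution:
  assumes h: "h \<in> carrier G" "h \<otimes> h = \<one>" "h \<noteq> \<one>"
    and b: "b \<in> carrier G" "b \<otimes> b = \<one>" "b \<noteq> \<one>" and "h \<noteq> b"
  obtains c where "c \<in> carrier G" "c \<otimes> c = \<one>" "c \<noteq> \<one>" "c \<noteq> h" "c \<noteq> b"
proof -
  have hh: "h \<otimes> (h \<otimes> y) = y" if "y \<in> carrier G" for y
    using h that by (simp flip: m_assoc)
  have bb: "b \<otimes> (b \<otimes> y) = y" if "y \<in> carrier G" for y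
    using b that by (simp flip: m_assoc)
  have hb: "h \<otimes> b \<noteq> \<one>"
  proof
    assume "h \<otimes> b = \<one>"
    then have "h \<otimes> (h \<otimes> b) = h" using h by simp
    then show False using hh b \<open>h \<noteq> b\<close> by simp
  qed
  show ?thesis
  proof (cases "h \<otimes> b = b \<otimes> h")
    case True
    have "h \<otimes> b \<otimes> (h \<otimes> b) = h \<otimes> (b \<otimes> h \<otimes> b)" using h b by (simp add: m_assoc)
    also have "\<dots> = \<one>" using True h b hh bb by (simp flip: True add: m_assoc)
    finally show ?thesis using that[of "h \<otimes> b"] h b hb by simp
  next
    case False
    have "h \<otimes> b \<otimes> h \<otimes> (h \<otimes> b \<otimes> h) = \<one>" using h b hh bb by (simp add: m_assoc)
    moreover have "h \<otimes> b \<otimes> h \<noteq> \<one>"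
    proof
      assume "h \<otimes> b \<otimes> h = \<one>"
      then have "h \<otimes> (h \<otimes> b \<otimes> h) \<otimes> h = \<one>" using h by simp
      then show False using h b hh by (simp add: m_assoc)
    qed
    moreover have "h \<otimes> b \<otimes> h \<noteq> b"
    proof
      assume "h \<otimes> b \<otimes> h = b"
      then have "h \<otimes> b \<otimes> h \<otimes> h = b \<otimes> h" by simp
      then show False using False h b hh by (simp add: m_assoc)
    qed
    ultimately show ?thesis using that[of "h \<otimes> b \<otimes> h"] h b hb by simp
  qed
qed

lemma exists_sylow_subgroup:
  assumes "finite (carrier G)" "Factorial_Ring.prime p"
  obtains P where "sylow_subgroup G p P"
proof -
  have "order G = p ^ multiplicity p (order G) * (order G div p ^ multiplicity p (order G))"
    using multiplicity_dvd[of p "order G"] by simp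
  then show ?thesis
    using sylow_thm[OF assms(2) is_group _ assms(1)] that unfolding sylow_subgroup_def by blast
qed

lemma normal_sylow_subgroup_contains_p_elements:
  assumes fin: "finite (carrier G)" and p: "Factorial_Ring.prime p"
    and P: "sylow_subgroup G p P" "P \<lhd> G" and x: "x \<in> carrier G" "ord x = p ^ k"
  shows "x \<in> P"
proof -
  interpret normal P G by (rule P(2))
  interpret F: group "G Mod P" by (rule factorgroup_is_group)
  let ?m = "p ^ multiplicity p (order G)"
  have cx: "P #> x \<in> carrier (G Mod P)" using x by (auto simp: carrier_FactGroup)
  have "(P #> x) [^]\<^bsub>G Mod P\<^esub> ord x = \<one>\<^bsub>G Mod P\<^esub>"
    using x(1) by (simp add: FactGroup_pow coset_join2 subgroup_axioms)
  then have dvd_pk: "F.ord (P #> x) dvd p ^ k" using F.pow_eq_id[OF cx] x by simp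
  have "card (rcosets P) * ?m = order G"
    using lagrange[OF subgroup_axioms] P(1) by (simp add: sylow_subgroup_def)
  moreover have "?m \<noteq> 0" using p by (simp add: prime_gt_0_nat)
  ultimately have "order (G Mod P) = order G div ?m"
    by (metis nonzero_mult_div_cancel_right order_def FactGroup_def partial_object.select_convs(1))
  moreover have "order G \<noteq> 0" using fin by (simp add: order_gt_0_iff_finite[symmetric])
  then have "coprime p (order G div ?m)"
    using prime_imp_coprime[OF p] multiplicity_decompose p not_prime_unit by blast
  ultimately have "coprime (p ^ k) (order (G Mod P))" by simp
  then have "is_unit (F.ord (P #> x))"
    using coprime_common_divisor dvd_pk F.ord_dvd_group_order[OF cx] by blast
  then have "F.ord (P #> x) = 1" by simp
  then have "P #> x = P" using F.ord_eq_1[OF cx] by simp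
  then show ?thesis using coset_join1[OF _ x(1) subgroup_axioms] by simp
qed

end

section \<open>Counting nontrivial \<open>p\<close>-elements\<close>

definition nontrivial_p_elements :: "('a, 'b) monoid_scheme \<Rightarrow> nat \<Rightarrow> 'a set" where
  "nontrivial_p_elements G p = {x \<in> carrier G. x \<noteq> \<one>\<^bsub>G\<^esub> \<and> (\<exists>k. group.ord G x = p ^ k)}"

lemma order_supergraph_adj_nontrivial_p_elements:
  assumes "x \<in> nontrivial_p_elements G p" "y \<in> nontrivial_p_elements G p" "x \<noteq> y"
  shows "order_supergraph_adj G x y"
proof -
  obtain k j where "group.ord G x = p ^ k" "group.ord G y = p ^ j"
    using assms by (auto simp: nontrivial_p_elements_def)
  moreover have "p ^ k dvd p ^ j \<or> p ^ j dvd p ^ k"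
    by (cases "k \<le> j") (auto simp: le_imp_power_dvd)
  ultimately show ?thesis
    using assms by (auto simp: order_supergraph_adj_def nontrivial_p_elements_def)
qed

context group
begin

lemma nontrivial_p_elementsE:
  assumes "x \<in> nontrivial_p_elements G p"
  obtains k where "0 < k" "ord x = p ^ k"
proof -
  obtain k where k: "ord x = p ^ k" and x: "x \<in> carrier G" "x \<noteq> \<one>"
    using assms by (auto simp: nontrivial_p_elements_def)
  then have "k \<noteq> 0" using ord_eq_1 by (metis power_0)
  then show ?thesis using that k by blast
qed

lemma nontrivial_p_elements_disjoint:
  assumes "Factorial_Ring.prime p" "Factorial_Ring.prime q" "p \<noteq> q"
  shows "nontrivial_p_elements G p \<inter> nontrivial_p_elements G q = {}"
proof (rule ccontr)
  assume "nontrivial_p_elements G p \<inter> nontrivial_p_elements G q \<noteq> {}"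
  then obtain x k j where "0 < k" "ord x = p ^ k" "ord x = q ^ j"
    by (metis disjoint_iff nontrivial_p_elementsE)
  then show False using prime_eq_if_power_dvd_power assms by (metis dvd_refl)
qed

lemma prime_dvd_order_if_nontrivial_p_element:
  assumes "x \<in> nontrivial_p_elements G p"
  shows "p dvd order G"
proof -
  obtain k where "0 < k" "ord x = p ^ k" using assms by (rule nontrivial_p_elementsE)
  then have "p dvd ord x" by simp
  also have "ord x dvd order G"
    using assms ord_dvd_group_order by (auto simp: nontrivial_p_elements_def)
  finally show ?thesis .
qed

lemma sylow_subgroup_minus_one_subset:
  assumes p: "Factorial_Ring.prime p" and P: "sylow_subgroup G p P"
  shows "P - {\<one>} \<subseteq> nontrivial_p_elements G p"
proof
  fix x assume x: "x \<in> P - {\<one>}"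
  have P_sub: "subgroup P G" using P by (simp add: sylow_subgroup_def)
  have "ord x dvd p ^ multiplicity p (order G)"
    using ord_dvd_subgroup_card[OF P_sub] x P by (auto simp: sylow_subgroup_def)
  then obtain k where "normalize (ord x) = p ^ k" by (blast elim: divides_primepow[OF p])
  then show "x \<in> nontrivial_p_elements G p"
    using x subgroup.subset[OF P_sub] by (auto simp: nontrivial_p_elements_def)
qed

lemma nontrivial_p_elements_subset_normal_sylow_subgroup:
  assumes "finite (carrier G)" "Factorial_Ring.prime p"
    and "sylow_subgroup G p P" "P \<lhd> G"
  shows "nontrivial_p_elements G p \<subseteq> P - {\<one>}"
  using normal_sylow_subgroup_contains_p_elements[OF assms]
  by (auto simp: nontrivial_p_elements_def)

lemma finite_nontrivial_p_elements:
  "finite (carrier G) \<Longrightarrow> finite (nontrivial_p_elements G p)"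
  by (simp add: nontrivial_p_elements_def)

lemma card_sylow_subgroup_le:
  assumes fin: "finite (carrier G)" and p: "Factorial_Ring.prime p" and P: "sylow_subgroup G p P"
  shows "card P - 1 \<le> card (nontrivial_p_elements G p)"
proof -
  have P_sub: "subgroup P G" using P by (simp add: sylow_subgroup_def)
  then have "finite P" using fin finite_subset subgroup.subset by blast
  then have "card P - 1 = card (P - {\<one>})" using subgroup.one_closed[OF P_sub] by simp
  also have "\<dots> \<le> card (nontrivial_p_elements G p)"
    using finite_nontrivial_p_elements[OF fin] sylow_subgroup_minus_one_subset[OF p P]
    by (rule card_mono)
  finally show ?thesis .
qed

lemma card_sylow_subgroup_eq_power:
  assumes "finite (carrier G)" "Factorial_Ring.prime p" "p dvd order G" "sylow_subgroup G p P"
  obtains a where "0 < a" "card P = p ^ a"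
proof -
  have "order G \<noteq> 0" using assms(1) by (simp add: order_gt_0_iff_finite[symmetric])
  moreover have "\<not> is_unit p" using assms(2) not_prime_unit by blast
  ultimately have "0 < multiplicity p (order G)"
    using multiplicity_gt_zero_iff assms(3) by blast
  then show ?thesis using that assms(4) by (auto simp: sylow_subgroup_def)
qed

lemma three_le_card_nontrivial_p_elements_if_not_normal:
  assumes fin: "finite (carrier G)" and p: "Factorial_Ring.prime p"
    and P: "sylow_subgroup G p P" "card P = p" "\<not> P \<lhd> G"
  shows "3 \<le> card (nontrivial_p_elements G p)"
proof -
  have P_sub: "subgroup P G" using P by (simp add: sylow_subgroup_def)
  obtain g h where gh: "g \<in> carrier G" "h \<in> P" "g \<otimes> h \<otimes> inv g \<notin> P"
    using P(3) P_sub normal_inv_iff by blast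
  define b where "b = g \<otimes> h \<otimes> inv g"
  have h: "h \<in> carrier G" "h \<noteq> \<one>"
    using gh subgroup.subset[OF P_sub] subgroup.one_closed[OF P_sub] by auto
  have b: "b \<in> carrier G" "b \<notin> P" "ord b = ord h"
    using gh h ord_conj by (auto simp: b_def)
  have PG: "P - {\<one>} \<subseteq> nontrivial_p_elements G p"
    using sylow_subgroup_minus_one_subset[OF p P(1)] .
  then have hp: "h \<in> nontrivial_p_elements G p" using gh h by blast
  then have bp: "b \<in> nontrivial_p_elements G p"
    using b ord_eq_1 h by (auto simp: nontrivial_p_elements_def)
  have finP: "finite P" using finite_subset[OF subgroup.subset[OF P_sub] fin] .
  have finE: "finite (nontrivial_p_elements G p)" using fin by (rule finite_nontrivial_p_elements)
  show ?thesis
  proof (cases "p = 2")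
    case False
    then have "3 \<le> p" using prime_ge_2_nat[OF p] by simp
    have "card (insert b (P - {\<one>})) = p"
      using b finP P(2) p subgroup.one_closed[OF P_sub] by (simp add: prime_gt_0_nat)
    moreover have "card (insert b (P - {\<one>})) \<le> card (nontrivial_p_elements G p)"
      using PG bp by (intro card_mono[OF finE]) blast
    ultimately show ?thesis using \<open>3 \<le> p\<close> by simp
  next
    case True
    have "ord h dvd 2" using ord_dvd_subgroup_card[OF P_sub gh(2)] P(2) True by simp
    then have "ord h = 2"
      using two_is_prime_nat[unfolded prime_nat_iff] ord_eq_1[OF h(1)] h(2) by auto
    then have hh: "h \<otimes> h = \<one>" and bb: "b \<otimes> b = \<one>" "b \<noteq> \<one>"
      using b(3) ord_eq_2_iff[OF h(1)] ord_eq_2_iff[OF b(1)] by auto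
    have "h \<noteq> b" using b gh by auto
    then obtain c where c: "c \<in> carrier G" "c \<otimes> c = \<one>" "c \<noteq> \<one>" "c \<noteq> h" "c \<noteq> b"
      using exists_third_involution[OF h(1) hh h(2) b(1) bb] by blast
    then have "c \<in> nontrivial_p_elements G p"
      using True ord_eq_2_iff[OF c(1)] by (auto simp: nontrivial_p_elements_def intro: exI[of _ 1])
    then have "{h, b, c} \<subseteq> nontrivial_p_elements G p" using hp bp by blast
    then have "card {h, b, c} \<le> card (nontrivial_p_elements G p)" by (rule card_mono[OF finE])
    moreover have "card {h, b, c} = 3" using c \<open>h \<noteq> b\<close> by auto
    ultimately show ?thesis by simp
  qed
qed

theorem three_le_card_nontrivial_p_elements_iff:
  assumes fin: "finite (carrier G)" and p: "Factorial_Ring.prime p"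
  shows "3 \<le> card (nontrivial_p_elements G p) \<longleftrightarrow>
    p dvd order G \<and> (5 \<le> p \<or> (\<exists>P. sylow_subgroup G p P \<and> (card P \<noteq> p \<or> \<not> P \<lhd> G)))"
proof
  assume three: "3 \<le> card (nontrivial_p_elements G p)"
  then have "nontrivial_p_elements G p \<noteq> {}" by auto
  then obtain x where "x \<in> nontrivial_p_elements G p" by blast
  then have dvd: "p dvd order G" by (rule prime_dvd_order_if_nontrivial_p_element)
  obtain P where P: "sylow_subgroup G p P" using exists_sylow_subgroup[OF fin p] .
  have "card P \<noteq> p \<or> \<not> P \<lhd> G" if "p < 5"
  proof (rule ccontr)
    assume "\<not> (card P \<noteq> p \<or> \<not> P \<lhd> G)"
    then have "card P = p" "P \<lhd> G" by auto
    have P_sub: "subgroup P G" using P by (simp add: sylow_subgroup_def)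
    have "finite P" using finite_subset[OF subgroup.subset[OF P_sub] fin] .
    then have "card (nontrivial_p_elements G p) \<le> card (P - {\<one>})"
      using nontrivial_p_elements_subset_normal_sylow_subgroup[OF fin p P \<open>P \<lhd> G\<close>]
      by (intro card_mono) auto
    also have "\<dots> < 3"
      using \<open>card P = p\<close> \<open>finite P\<close> subgroup.one_closed[OF P_sub] prime_less_5_cases[OF p that]
      by auto
    finally show False using three by simp
  qed
  then show "p dvd order G \<and> (5 \<le> p \<or> (\<exists>P. sylow_subgroup G p P \<and> (card P \<noteq> p \<or> \<not> P \<lhd> G)))"
    using dvd P by force
next
  assume "p dvd order G \<and> (5 \<le> p \<or> (\<exists>P. sylow_subgroup G p P \<and> (card P \<noteq> p \<or> \<not> P \<lhd> G)))"
  then obtain P where dvd: "p dvd order G" and P: "sylow_subgroup G p P"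
    and P_big: "5 \<le> p \<or> card P \<noteq> p \<or> \<not> P \<lhd> G"
    using exists_sylow_subgroup[OF fin p] by blast
  obtain a where a: "0 < a" "card P = p ^ a"
    using card_sylow_subgroup_eq_power[OF fin p dvd P] .
  show "3 \<le> card (nontrivial_p_elements G p)"
  proof (cases "4 \<le> card P")
    case True
    then show ?thesis using card_sylow_subgroup_le[OF fin p P] by simp
  next
    case False
    have "a = 1"
    proof (rule ccontr)
      assume "a \<noteq> 1"
      have "2 * 2 \<le> p * p" using p prime_ge_2_nat mult_le_mono by blast
      also have "\<dots> \<le> p ^ a"
        using \<open>a \<noteq> 1\<close> a(1) prime_gt_0_nat[OF p] power_increasing[of 2 a p]
        by (simp add: power2_eq_square)
      finally show False using False a(2) by simp
    qed
    then have "card P = p" using a by simp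
    then show ?thesis
      using P_big False three_le_card_nontrivial_p_elements_if_not_normal[OF fin p P] by simp
  qed
qed

end

section \<open>Components of the order supergraph\<close>

lemma (in group) component_eq_if_one_mem:
  assumes W: "W \<subseteq> carrier G" "\<one> \<in> W" and u: "u \<in> W"
  shows "{v. (induced_adj W (order_supergraph_adj G))\<^sup>*\<^sup>* u v} = W"
proof -
  let ?R = "induced_adj W (order_supergraph_adj G)"
  have one_adj: "?R x \<one>" "?R \<one> x" if "x \<in> W" "x \<noteq> \<one>" for x
    using that W by (auto simp: induced_adj_def order_supergraph_adj_def)
  have "?R\<^sup>*\<^sup>* u \<one>" using one_adj(1)[OF u] by (cases "u = \<one>") auto
  moreover have "?R\<^sup>*\<^sup>* \<one> v" if "v \<in> W" for v
    using one_adj(2)[OF that] by (cases "v = \<one>") auto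
  moreover have "v \<in> W" if "?R\<^sup>*\<^sup>* u v" for v
    using that u by (induction rule: rtranclp_induct) (auto simp: induced_adj_def)
  ultimately show ?thesis by (auto intro: rtranclp_trans)
qed

locale eppo_group = group G for G (structure) +
  assumes finite_carrier: "finite (carrier G)"
    and ord_prime_power: "x \<in> carrier G \<Longrightarrow> \<exists>p k. Factorial_Ring.prime p \<and> ord x = p ^ k"
begin

lemma nontrivial_elementE:
  assumes "x \<in> carrier G" "x \<noteq> \<one>"
  obtains p where "Factorial_Ring.prime p" "x \<in> nontrivial_p_elements G p"
  using ord_prime_power[OF assms(1)] assms by (auto simp: nontrivial_p_elements_def)

lemma order_supergraph_adj_nontrivial_p_elementsD:
  assumes p: "Factorial_Ring.prime p" and x: "x \<in> nontrivial_p_elements G p"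
    and y: "y \<in> carrier G" "y \<noteq> \<one>" and adj: "order_supergraph_adj G x y"
  shows "y \<in> nontrivial_p_elements G p"
proof -
  obtain k where k: "0 < k" "ord x = p ^ k" using x by (rule nontrivial_p_elementsE)
  obtain q where q: "Factorial_Ring.prime q" "y \<in> nontrivial_p_elements G q"
    using y by (rule nontrivial_elementE)
  obtain j where j: "0 < j" "ord y = q ^ j" using q(2) by (rule nontrivial_p_elementsE)
  have "p ^ k dvd q ^ j \<or> q ^ j dvd p ^ k"
    using adj k j by (auto simp: order_supergraph_adj_def)
  then have "p = q"
    using prime_eq_if_power_dvd_power[OF p q(1) k(1)] prime_eq_if_power_dvd_power[OF q(1) p j(1)]
    by auto
  then show ?thesis using q(2) by simp
qed

lemma component_eq_nontrivial_p_elements: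
  assumes W: "W \<subseteq> carrier G" "\<one> \<notin> W" and p: "Factorial_Ring.prime p"
    and u: "u \<in> W" "u \<in> nontrivial_p_elements G p"
  shows "{v. (induced_adj W (order_supergraph_adj G))\<^sup>*\<^sup>* u v} = nontrivial_p_elements G p \<inter> W"
proof -
  let ?R = "induced_adj W (order_supergraph_adj G)"
  have "v \<in> nontrivial_p_elements G p \<inter> W" if "?R\<^sup>*\<^sup>* u v" for v
    using that
  proof (induction rule: rtranclp_induct)
    case (step y z)
    then show ?case
      using order_supergraph_adj_nontrivial_p_elementsD[OF p] W by (auto simp: induced_adj_def)
  qed (use u in simp)
  moreover have "?R\<^sup>*\<^sup>* u v" if "v \<in> nontrivial_p_elements G p \<inter> W" for v
    using that u order_supergraph_adj_nontrivial_p_elements[of u G p v]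
    by (cases "u = v") (auto simp: induced_adj_def)
  ultimately show ?thesis by blast
qed

theorem cyclically_separable_iff_two_primes:
  "cyclically_separable (carrier G) (order_supergraph_adj G) \<longleftrightarrow>
    (\<exists>p q. Factorial_Ring.prime p \<and> Factorial_Ring.prime q \<and> p \<noteq> q \<and>
       3 \<le> card (nontrivial_p_elements G p) \<and> 3 \<le> card (nontrivial_p_elements G q))"
  (is "_ \<longleftrightarrow> (\<exists>p q. ?two_primes p q)")
proof
  assume "cyclically_separable (carrier G) (order_supergraph_adj G)"
  then obtain S C1 C2 where
    C: "is_component (carrier G - S) (order_supergraph_adj G) C1"
       "is_component (carrier G - S) (order_supergraph_adj G) C2" "C1 \<noteq> C2"
    and cycles: "has_cycle_in C1 (order_supergraph_adj G)" "has_cycle_in C2 (order_supergraph_adj G)"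
    by (auto simp: cyclically_separable_def cyclic_vertex_cutset_def)
  define W where "W = carrier G - S"
  have W: "W \<subseteq> carrier G" by (auto simp: W_def)
  have one: "\<one> \<notin> W"
    using C component_eq_if_one_mem[OF W] by (auto simp: is_component_def W_def)
  have cyclic_component:
    "\<exists>p. Factorial_Ring.prime p \<and> C = nontrivial_p_elements G p \<inter> W \<and>
      3 \<le> card (nontrivial_p_elements G p)"
    if C: "is_component W (order_supergraph_adj G) C" "has_cycle_in C (order_supergraph_adj G)" for C
  proof -
    obtain u where u: "u \<in> W" "C = {v. (induced_adj W (order_supergraph_adj G))\<^sup>*\<^sup>* u v}"
      using C(1) by (auto simp: is_component_def)
    obtain p where p: "Factorial_Ring.prime p" "u \<in> nontrivial_p_elements G p"
      using u W one by (auto elim: nontrivial_elementE)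
    have C_eq: "C = nontrivial_p_elements G p \<inter> W"
      using component_eq_nontrivial_p_elements[OF W one p(1) u(1) p(2)] u(2) by simp
    have fin: "finite (nontrivial_p_elements G p)"
      using finite_carrier by (rule finite_nontrivial_p_elements)
    have "3 \<le> card C" using has_cycle_in_card_ge_3[OF C(2)] C_eq fin by simp
    also have "card C \<le> card (nontrivial_p_elements G p)" using C_eq fin by (simp add: card_mono)
    finally show ?thesis using p C_eq by blast
  qed
  obtain p where "Factorial_Ring.prime p" "C1 = nontrivial_p_elements G p \<inter> W"
      "3 \<le> card (nontrivial_p_elements G p)"
    using cyclic_component C(1) cycles(1) unfolding W_def by blast
  moreover obtain q where "Factorial_Ring.prime q" "C2 = nontrivial_p_elements G q \<inter> W"
      "3 \<le> card (nontrivial_p_elements G q)"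
    using cyclic_component C(2) cycles(2) unfolding W_def by blast
  ultimately show "\<exists>p q. ?two_primes p q" using \<open>C1 \<noteq> C2\<close> by blast
next
  assume "\<exists>p q. ?two_primes p q"
  then obtain p q where pq: "?two_primes p q" by blast
  define W where "W = carrier G - {\<one>}"
  have W: "W \<subseteq> carrier G" "\<one> \<notin> W" by (auto simp: W_def)
  have cyclic_component:
    "is_component W (order_supergraph_adj G) (nontrivial_p_elements G r) \<and>
      has_cycle_in (nontrivial_p_elements G r) (order_supergraph_adj G)"
    if r: "Factorial_Ring.prime r" "3 \<le> card (nontrivial_p_elements G r)" for r
  proof
    have "nontrivial_p_elements G r \<noteq> {}" using r(2) by (intro notI) simp
    then obtain u where u: "u \<in> nontrivial_p_elements G r" by blast
    have NW: "nontrivial_p_elements G r \<inter> W = nontrivial_p_elements G r"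
      by (auto simp: W_def nontrivial_p_elements_def)
    then have "u \<in> W" using u by blast
    then have "nontrivial_p_elements G r = {v. (induced_adj W (order_supergraph_adj G))\<^sup>*\<^sup>* u v}"
      using component_eq_nontrivial_p_elements[OF W r(1) _ u] NW by simp
    then show "is_component W (order_supergraph_adj G) (nontrivial_p_elements G r)"
      unfolding is_component_def using \<open>u \<in> W\<close> by blast
    show "has_cycle_in (nontrivial_p_elements G r) (order_supergraph_adj G)"
      by (rule has_cycle_in_clique[OF r(2) order_supergraph_adj_nontrivial_p_elements])
  qed
  have "nontrivial_p_elements G p \<noteq> nontrivial_p_elements G q"
    using pq nontrivial_p_elements_disjoint[of p q] by auto
  moreover have "{\<one>} \<subseteq> carrier G" by simp
  ultimately have "cyclic_vertex_cutset (carrier G) (order_supergraph_adj G) {\<one>}"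
    using cyclic_component[of p] cyclic_component[of q] pq
    unfolding cyclic_vertex_cutset_def vertex_cutset_def W_def[symmetric] by blast
  then show "cyclically_separable (carrier G) (order_supergraph_adj G)"
    unfolding cyclically_separable_def by blast
qed

end

theorem mainTheorem3:
  fixes G :: "('a, 'b) monoid_scheme"
  assumes "EPPO G"
  defines "c1 \<equiv> (\<exists>p::nat. Factorial_Ring.prime p \<and> p \<ge> 5 \<and> p dvd order G)"
      and "c2 \<equiv> (3 dvd order G \<and>
                 (\<exists>P. sylow_subgroup G 3 P \<and> (card P \<noteq> 3 \<or> \<not> P \<lhd> G)))"
      and "c3 \<equiv> (2 dvd order G \<and>
                 (\<exists>P. sylow_subgroup G 2 P \<and> (card P \<noteq> 2 \<or> \<not> P \<lhd> G)))"
  shows "cyclically_separable (carrier G) (order_supergraph_adj G) \<longleftrightarrow>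
           ((\<exists>p q::nat. Factorial_Ring.prime p \<and> Factorial_Ring.prime q \<and> p > q \<and> q \<ge> 5 \<and> p * q dvd order G) \<or>
            (c1 \<and> c2) \<or> (c1 \<and> c3) \<or> (c2 \<and> c3))"
proof -
  interpret eppo_group G
    using assms(1) by (simp add: EPPO_def eppo_group_def eppo_group_axioms_def)
  let ?M = "\<lambda>p. 3 \<le> card (nontrivial_p_elements G p)"
  have M: "?M p \<longleftrightarrow>
      p dvd order G \<and> (5 \<le> p \<or> (\<exists>P. sylow_subgroup G p P \<and> (card P \<noteq> p \<or> \<not> P \<lhd> G)))"
    if "Factorial_Ring.prime p" for p
    using three_le_card_nontrivial_p_elements_iff[OF finite_carrier that] .
  have big: "?M p \<longleftrightarrow> p dvd order G" if "Factorial_Ring.prime p" "5 \<le> p" for p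
    using M that by simp
  have "?M 3 = c2" "?M 2 = c3" using M[of 3] M[of 2] by (simp_all add: c2_def c3_def)
  then show ?thesis
      using two_primes_iff[of ?M "order G", OF big]
    unfolding cyclically_separable_iff_two_primes c1_def by simp
qed

end
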